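(* Let $r\in\mathbb{R}$, $b\in\mathbb{R}$, $\mu\in\mathbb{R}^N$, and let $\Sigma\in\mathbb{R}^{N\times N}$ be a symmetric positive definite matrix. Let $E:=\{x\in\mathbb{R}^N\setminus\{0\}: b-\mu^Tx>0\}$ and define $f(x):=\left(\frac{b-\mu^Tx}{\sqrt{x^T\Sigma x}}\right)^r$ on $E$. If $r=0$, then $f$ is locally concave on $E$. If $r\neq0$, then $\mathrm{sign}(-r)\cdot f$ is locally convex on $E$ if and only if for every $x\in E$ $$\mu^T\Sigma^{-1}\mu\le(2-r)\frac{(\mu^Tx)^2}{x^T\Sigma x}-2r\sqrt{\theta}\,\frac{\mu^Tx}{\sqrt{x^T\Sigma x}}-(r+1)\theta,\qquad \theta:=\frac{(b-\mu^Tx)^2}{x^T\Sigma x}.$$ Moreover, the function $x\mapsto\ln\frac{b-\mu^Tx}{\sqrt{x^T\Sigma x}}$ is locally concave on $E$ if and only if for every $x\in E$ $$\mu^T\Sigma^{-1}\mu\le 2\frac{(\mu^Tx)^2}{x^T\Sigma x}-\theta.$$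
   Context: A twice differentiable function is locally convex (resp. locally concave) on a set $A$ if its Hessian is positive semidefinite (resp. negative semidefinite) at every point of $A$. *)

theory Defs
  imports "HOL-Analysis.Analysis"
begin

definition has_hessian_at :: "(real^'n \<Rightarrow> real) \<Rightarrow> real^'n \<Rightarrow> real^'n^'n \<Rightarrow> bool" where
  "has_hessian_at f x H \<longleftrightarrow>
     (\<exists>g. (\<forall>\<^sub>F y in nhds x. (f has_derivative (\<lambda>h. g y \<bullet> h)) (at y))
          \<and> (g has_derivative (\<lambda>h. H *v h)) (at x))"

definition locally_convex_on :: "(real^'n) set \<Rightarrow> (real^'n \<Rightarrow> real) \<Rightarrow> bool" where
  "locally_convex_on A f \<longleftrightarrow>
     (\<forall>x\<in>A. \<exists>H. has_hessian_at f x H \<and> (\<forall>v. 0 \<le> v \<bullet> (H *v v)))"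

definition locally_concave_on :: "(real^'n) set \<Rightarrow> (real^'n \<Rightarrow> real) \<Rightarrow> bool" where
  "locally_concave_on A f \<longleftrightarrow>
     (\<forall>x\<in>A. \<exists>H. has_hessian_at f x H \<and> (\<forall>v. v \<bullet> (H *v v) \<le> 0))"

end

theory Submission
  imports Defs
begin

text \<open>
  Put a = b - \<mu>\<bullet>x, q = x\<bullet>\<Sigma>x and L = ln (a / sqrt q). On E the function f equals exp (r L),
  so its Hessian form is r f (D^2L[v] + r (DL[v])^2). Multiplied by a^2 this is an explicit
  quadratic polynomial in \<mu>\<bullet>v, \<Sigma>x\<bullet>v and v\<bullet>\<Sigma>v, whose case r = 0 is the Hessian form of L itself.
  Its sign is decided in the geometry of the inner product u\<bullet>\<Sigma>w: splitting v = y x + w with w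
  orthogonal to x, the term \<mu>\<bullet>w is the inner product of w with the part of \<Sigma>^-1\<mu> orthogonal
  to x, whose squared length is p / q for p = q (\<mu>\<bullet>\<Sigma>^-1\<mu>) - (\<mu>\<bullet>x)^2 \<ge> 0. Cauchy-Schwarz,
  which is sharp on the span of x and \<Sigma>^-1\<mu>, reduces the sign question to a binary quadratic
  form A y^2 + 2 B y g + C g^2 in y and g = (\<mu>\<bullet>w) / p, with A C - B^2 = -a^2 p (A + p); the
  criterion of the theorem is A + p \<le> 0.
\<close>

lemma symmetric_matrix_inner_commute:
  fixes S :: "real^'n^'n"
  assumes "transpose S = S"
  shows "u \<bullet> (S *v w) = w \<bullet> (S *v u)"
proof -
  have "u \<bullet> (S *v w) = (transpose S *v u) \<bullet> w"
    by (simp add: dot_lmul_matrix)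
  then show ?thesis
    using assms by (simp add: inner_commute)
qed

lemma pos_def_matrix_inv_right:
  fixes S :: "real^'n^'n"
  assumes pd: "\<forall>x. x \<noteq> 0 \<longrightarrow> 0 < x \<bullet> (S *v x)"
  shows "S *v (matrix_inv S *v m) = m"
proof -
  have "\<forall>x. S *v x = 0 \<longrightarrow> x = 0"
    using pd by (metis inner_zero_right less_irrefl)
  then have "invertible S"
    using invertible_left_inverse matrix_left_invertible_ker by blast
  then have "S ** matrix_inv S = mat 1"
    unfolding invertible_def matrix_inv_def by (rule someI2_ex) blast
  then show ?thesis
    by (simp add: matrix_vector_mul_assoc)
qed

lemma pos_def_cauchy_schwarz:
  fixes S :: "real^'n^'n"
  assumes sym: "transpose S = S" and pd: "\<forall>x. x \<noteq> 0 \<longrightarrow> 0 < x \<bullet> (S *v x)"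
  shows "(u \<bullet> (S *v w))\<^sup>2 \<le> (u \<bullet> (S *v u)) * (w \<bullet> (S *v w))"
proof (cases "w = 0")
  case True
  then show ?thesis by simp
next
  case False
  let ?ww = "w \<bullet> (S *v w)" and ?uw = "u \<bullet> (S *v w)" and ?uu = "u \<bullet> (S *v u)"
  have ww: "?ww > 0" using pd False by blast
  define l where "l = ?uw / ?ww"
  have "0 \<le> (u - l *\<^sub>R w) \<bullet> (S *v (u - l *\<^sub>R w))"
    using pd by (metis order.refl inner_zero_left less_imp_le)
  also have "\<dots> = ?uu - 2 * l * ?uw + l\<^sup>2 * ?ww"
    using symmetric_matrix_inner_commute[OF sym, of w u]
    by (simp add: algebra_simps inner_diff_left inner_diff_right power2_eq_square)
  also have "\<dots> = ?uu - ?uw\<^sup>2 / ?ww"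
    using ww by (simp add: l_def field_simps power2_eq_square)
  finally show ?thesis
    using ww by (simp add: field_simps)
qed

lemma matrix_form_scaleR_add:
  fixes S :: "real^'n^'n"
  shows "(k1 *\<^sub>R a1 + k2 *\<^sub>R a2) \<bullet> (S *v (l1 *\<^sub>R b1 + l2 *\<^sub>R b2))
    = k1*l1*(a1 \<bullet> (S *v b1)) + k1*l2*(a1 \<bullet> (S *v b2))
      + k2*l1*(a2 \<bullet> (S *v b1)) + k2*l2*(a2 \<bullet> (S *v b2))"
  by (simp add: matrix_vector_right_distrib matrix_vector_mult_scaleR
      inner_add_left inner_add_right algebra_simps)

text \<open>With v = y x + w and w S-orthogonal to x, c is the S-inner product of w with \<open>nu_perp\<close>,
  the part of nu S-orthogonal to x, and p / q is the squared S-length of \<open>nu_perp\<close>.\<close>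

lemma form_triple_bound:
  fixes S :: "real^'n^'n"
  assumes sym: "transpose S = S" and pd: "\<forall>x. x \<noteq> 0 \<longrightarrow> 0 < x \<bullet> (S *v x)"
    and x: "x \<noteq> 0" and nu: "S *v nu = mu"
  defines "q \<equiv> x \<bullet> (S *v x)"
    and "p \<equiv> x \<bullet> (S *v x) * (nu \<bullet> (S *v nu)) - (mu \<bullet> x)\<^sup>2"
  obtains y c R where "mu \<bullet> v = (mu \<bullet> x) * y + c" "(S *v x) \<bullet> v = q * y"
    "v \<bullet> (S *v v) = q * y\<^sup>2 + R" "0 \<le> R" "q * c\<^sup>2 \<le> p * R"
proof -
  have q: "q > 0" using pd x by (simp add: q_def)
  have nu_v: "nu \<bullet> (S *v v) = mu \<bullet> v" and nu_x: "nu \<bullet> (S *v x) = mu \<bullet> x"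
    and x_nu: "x \<bullet> (S *v nu) = mu \<bullet> x"
    using symmetric_matrix_inner_commute[OF sym, of nu] nu by (simp_all add: inner_commute)
  have x_v: "x \<bullet> (S *v v) = (S *v x) \<bullet> v" and v_x: "v \<bullet> (S *v x) = (S *v x) \<bullet> v"
    using symmetric_matrix_inner_commute[OF sym, of v x] by (simp_all add: inner_commute)
  define y where "y = (S *v x) \<bullet> v / q"
  define c where "c = mu \<bullet> v - (mu \<bullet> x) * y"
  define R where "R = v \<bullet> (S *v v) - q * y\<^sup>2"
  define w where "w = 1 *\<^sub>R v + (- y) *\<^sub>R x"
  define nu_perp where "nu_perp = 1 *\<^sub>R nu + (- (mu \<bullet> x) / q) *\<^sub>R x"
  have "nu_perp \<bullet> (S *v w) = c"
    unfolding nu_perp_def w_def matrix_form_scaleR_add using q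
    by (simp add: c_def y_def nu_v nu_x x_v q_def[symmetric] field_simps)
  moreover have "nu_perp \<bullet> (S *v nu_perp) = p / q"
    unfolding nu_perp_def matrix_form_scaleR_add using q
    by (simp add: p_def nu_x x_nu q_def[symmetric] field_simps power2_eq_square)
  moreover have "w \<bullet> (S *v w) = R"
    unfolding w_def matrix_form_scaleR_add using q
    by (simp add: R_def y_def x_v v_x q_def[symmetric] field_simps power2_eq_square)
  ultimately have "c\<^sup>2 \<le> p / q * R"
    using pos_def_cauchy_schwarz[OF sym pd, of nu_perp w] by simp
  then have "q * c\<^sup>2 \<le> p * R"
    using q by (simp add: field_simps)
  moreover have "0 \<le> R"
    using pd \<open>w \<bullet> (S *v w) = R\<close> by (metis inner_zero_left order.refl less_imp_le)
  moreover have "mu \<bullet> v = (mu \<bullet> x) * y + c" "(S *v x) \<bullet> v = q * y" "v \<bullet> (S *v v) = q * y\<^sup>2 + R"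
    using q by (simp_all add: c_def y_def R_def)
  ultimately show thesis
    using that by blast
qed

lemma form_triple_attained:
  fixes S :: "real^'n^'n" and x :: "real^'n"
  assumes sym: "transpose S = S" and nu: "S *v nu = mu"
  defines "q \<equiv> x \<bullet> (S *v x)"
    and "p \<equiv> x \<bullet> (S *v x) * (nu \<bullet> (S *v nu)) - (mu \<bullet> x)\<^sup>2"
  obtains v where "mu \<bullet> v = (mu \<bullet> x) * y + g * p" "(S *v x) \<bullet> v = q * y"
    "v \<bullet> (S *v v) = q * (y\<^sup>2 + g\<^sup>2 * p)"
proof -
  have nu_x: "nu \<bullet> (S *v x) = mu \<bullet> x" and x_nu: "x \<bullet> (S *v nu) = mu \<bullet> x"
    using symmetric_matrix_inner_commute[OF sym, of nu] nu by (simp_all add: inner_commute)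
  have mu_form: "mu \<bullet> u = nu \<bullet> (S *v u)" and Sx_form: "(S *v x) \<bullet> u = x \<bullet> (S *v u)" for u
    using symmetric_matrix_inner_commute[OF sym, of nu u]
      symmetric_matrix_inner_commute[OF sym, of x u] nu
    by (simp_all add: inner_commute)
  define v where "v = (y - g * (mu \<bullet> x)) *\<^sub>R x + (g * q) *\<^sub>R nu"
  have "mu \<bullet> v = (mu \<bullet> x) * y + g * p"
    unfolding mu_form v_def
    using matrix_form_scaleR_add[of 0 nu 1 nu S "y - g * (mu \<bullet> x)" x "g * q" nu]
    by (simp add: nu_x p_def q_def[symmetric] algebra_simps power2_eq_square)
  moreover have "(S *v x) \<bullet> v = q * y"
    unfolding Sx_form v_def
    using matrix_form_scaleR_add[of 0 x 1 x S "y - g * (mu \<bullet> x)" x "g * q" nu]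
    by (simp add: x_nu q_def[symmetric] algebra_simps)
  moreover have "v \<bullet> (S *v v) = q * (y\<^sup>2 + g\<^sup>2 * p)"
    unfolding v_def
    using matrix_form_scaleR_add[of "y - g * (mu \<bullet> x)" x "g * q" nu S
        "y - g * (mu \<bullet> x)" x "g * q" nu]
    by (simp add: nu_x x_nu p_def q_def[symmetric] algebra_simps power2_eq_square)
  ultimately show thesis
    using that by blast
qed

lemma quadratic_form2_nonpos_iff:
  fixes A B C :: real
  shows "(\<forall>x y. A*x\<^sup>2 + 2*B*x*y + C*y\<^sup>2 \<le> 0) \<longleftrightarrow> A \<le> 0 \<and> C \<le> 0 \<and> B\<^sup>2 \<le> A*C"
proof
  assume nonpos: "\<forall>x y. A*x\<^sup>2 + 2*B*x*y + C*y\<^sup>2 \<le> 0"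
  have A: "A \<le> 0" and C: "C \<le> 0"
    using nonpos[rule_format, of 1 0] nonpos[rule_format, of 0 1] by simp_all
  have "B\<^sup>2 \<le> A*C"
  proof (cases "A = 0")
    case True
    have "B = 0"
    proof (rule ccontr)
      assume "B \<noteq> 0"
      then have "2*B*((\<bar>C\<bar>+1)/(2*B)) = \<bar>C\<bar>+1" by simp
      then show False
        using True nonpos[rule_format, of "(\<bar>C\<bar>+1)/(2*B)" 1] by simp
    qed
    then show ?thesis using True by simp
  next
    case False
    have "A*B\<^sup>2 + 2*B*B*(-A) + C*(-A)\<^sup>2 \<le> 0"
      using nonpos by blast
    then have "A * (A*C - B\<^sup>2) \<le> 0"
      by (simp add: algebra_simps power2_eq_square)
    then show ?thesis
      using A False by (smt (verit) mult_neg_neg)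
  qed
  with A C show "A \<le> 0 \<and> C \<le> 0 \<and> B\<^sup>2 \<le> A*C" by simp
next
  assume "A \<le> 0 \<and> C \<le> 0 \<and> B\<^sup>2 \<le> A*C"
  then have A: "A \<le> 0" and C: "C \<le> 0" and disc: "B\<^sup>2 \<le> A*C" by auto
  show "\<forall>x y. A*x\<^sup>2 + 2*B*x*y + C*y\<^sup>2 \<le> 0"
  proof (intro allI)
    fix x y :: real
    show "A*x\<^sup>2 + 2*B*x*y + C*y\<^sup>2 \<le> 0"
    proof (cases "A = 0")
      case True
      then show ?thesis using disc C by (simp add: mult_nonpos_nonneg)
    next
      case False
      have "A * (A*x\<^sup>2 + 2*B*x*y + C*y\<^sup>2) = (A*x + B*y)\<^sup>2 + (A*C - B\<^sup>2)*y\<^sup>2"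
        by (simp add: algebra_simps power2_eq_square)
      also have "\<dots> \<ge> 0" using disc by simp
      finally show ?thesis
        using A False by (simp add: zero_le_mult_iff)
    qed
  qed
qed

lemma reduced_form_nonpos_iff:
  fixes a p r u :: real
  assumes a: "a > 0" and p: "p \<ge> 0"
  shows "(\<forall>y g. (r-1)*(u*y + g*p)\<^sup>2 + 2*r*a*(u*y + g*p)*y + (r+1)*a\<^sup>2*y\<^sup>2 \<le> a\<^sup>2*g\<^sup>2*p)
     \<longleftrightarrow> (r-1)*u\<^sup>2 + 2*r*a*u + (r+1)*a\<^sup>2 + p \<le> 0"
proof -
  define A where "A = (r-1)*u\<^sup>2 + 2*r*a*u + (r+1)*a\<^sup>2"
  define B where "B = ((r-1)*u + r*a) * p"
  define C where "C = (r-1)*p\<^sup>2 - a\<^sup>2*p"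
  have form: "(r-1)*(u*y + g*p)\<^sup>2 + 2*r*a*(u*y + g*p)*y + (r+1)*a\<^sup>2*y\<^sup>2 - a\<^sup>2*g\<^sup>2*p
      = A*y\<^sup>2 + 2*B*y*g + C*g\<^sup>2" for y g
    by (simp add: A_def B_def C_def algebra_simps power2_eq_square)
  have det: "A*C - B\<^sup>2 = - (a\<^sup>2 * p) * (A + p)"
    by (simp add: A_def B_def C_def algebra_simps power2_eq_square)
  have "(\<forall>y g. (r-1)*(u*y + g*p)\<^sup>2 + 2*r*a*(u*y + g*p)*y + (r+1)*a\<^sup>2*y\<^sup>2 \<le> a\<^sup>2*g\<^sup>2*p)
      \<longleftrightarrow> (\<forall>y g. A*y\<^sup>2 + 2*B*y*g + C*g\<^sup>2 \<le> 0)"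
    by (simp flip: form)
  also have "\<dots> \<longleftrightarrow> A \<le> 0 \<and> C \<le> 0 \<and> B\<^sup>2 \<le> A*C"
    by (rule quadratic_form2_nonpos_iff)
  also have "\<dots> \<longleftrightarrow> A + p \<le> 0"
  proof (cases "p = 0")
    case True
    then show ?thesis by (simp add: B_def C_def)
  next
    case False
    then have ap: "a\<^sup>2 * p > 0" using a p by simp
    have "B\<^sup>2 \<le> A*C \<longleftrightarrow> A + p \<le> 0"
      using det mult_le_0_iff[of "a\<^sup>2 * p" "A + p"] ap by auto
    moreover have "C \<le> 0" if "A < 0" "B\<^sup>2 \<le> A*C"
      using that by (smt (verit) mult_neg_pos zero_le_power2)
    ultimately show ?thesis
      using p False by force
  qed
  finally show ?thesis
    by (simp add: A_def)
qed

lemma reduced_form_bound: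
  fixes a c p q r u y R :: real
  assumes a: "a > 0" and p: "p \<ge> 0" and q: "q > 0" and R: "R \<ge> 0" and cs: "q * c\<^sup>2 \<le> p * R"
    and crit: "(r-1)*u\<^sup>2 + 2*r*a*u + (r+1)*a\<^sup>2 + p \<le> 0"
  shows "(r-1)*(u*y + c)\<^sup>2 + 2*r*a*(u*y + c)*y + (r+1)*a\<^sup>2*y\<^sup>2 \<le> a\<^sup>2 / q * R"
proof -
  have bound: "(r-1)*(u*y + g*p)\<^sup>2 + 2*r*a*(u*y + g*p)*y + (r+1)*a\<^sup>2*y\<^sup>2 \<le> a\<^sup>2*g\<^sup>2*p" for g
    using reduced_form_nonpos_iff[OF a p, of r u] crit by blast
  show ?thesis
  proof (cases "p = 0")
    case True
    then have "c = 0" using cs q by (simp add: mult_le_0_iff)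
    moreover have "0 \<le> a\<^sup>2 / q * R" using R q by simp
    ultimately show ?thesis using bound[of 0] by simp
  next
    case False
    have "a\<^sup>2 * (q * c\<^sup>2) \<le> a\<^sup>2 * (p * R)"
      using cs by (simp add: mult_left_mono)
    then have "a\<^sup>2 * (c/p)\<^sup>2 * p \<le> a\<^sup>2 / q * R"
      using q p False by (simp add: field_simps power2_eq_square ac_simps)
    then show ?thesis
      using bound[of "c/p"] False by simp
  qed
qed

text \<open>With L y = ln ((b - mu\<bullet>y) / sqrt (y\<bullet>Sy)), this is (b - mu\<bullet>x)^2 (D^2L[v] + r (DL[v])^2),
  see \<open>log_ratio_gradient_derivative\<close>.\<close>

definition ratio_hessian_form :: "real \<Rightarrow> real^'n^'n \<Rightarrow> real^'n \<Rightarrow> real \<Rightarrow> real^'n \<Rightarrow> real^'n \<Rightarrow> real"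
  where "ratio_hessian_form r S mu b x v =
    (r - 1) * (mu \<bullet> v)\<^sup>2 + 2 * r * ((b - mu \<bullet> x) / (x \<bullet> (S *v x))) * (mu \<bullet> v) * ((S *v x) \<bullet> v)
    + (r + 2) * ((b - mu \<bullet> x) / (x \<bullet> (S *v x)))\<^sup>2 * ((S *v x) \<bullet> v)\<^sup>2
    - (b - mu \<bullet> x)\<^sup>2 / (x \<bullet> (S *v x)) * (v \<bullet> (S *v v))"

lemma ratio_hessian_form_triple:
  assumes "mu \<bullet> v = (mu \<bullet> x) * y + c" "(S *v x) \<bullet> v = x \<bullet> (S *v x) * y"
    and "v \<bullet> (S *v v) = x \<bullet> (S *v x) * y\<^sup>2 + R" and "x \<bullet> (S *v x) \<noteq> 0"
  shows "ratio_hessian_form r S mu b x v =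
    (r-1)*((mu \<bullet> x)*y + c)\<^sup>2 + 2*r*(b - mu \<bullet> x)*((mu \<bullet> x)*y + c)*y + (r+1)*(b - mu \<bullet> x)\<^sup>2*y\<^sup>2
    - (b - mu \<bullet> x)\<^sup>2 / (x \<bullet> (S *v x)) * R"
  using assms unfolding ratio_hessian_form_def by (simp add: field_simps power2_eq_square)

lemma ratio_hessian_form_nonpos_iff:
  fixes S :: "real^'n^'n"
  assumes sym: "transpose S = S" and pd: "\<forall>x. x \<noteq> 0 \<longrightarrow> 0 < x \<bullet> (S *v x)"
    and x: "x \<noteq> 0" and a: "0 < b - mu \<bullet> x"
  shows "(\<forall>v. ratio_hessian_form r S mu b x v \<le> 0) \<longleftrightarrow>
    x \<bullet> (S *v x) * (mu \<bullet> (matrix_inv S *v mu))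
      \<le> (2 - r) * (mu \<bullet> x)\<^sup>2 - 2 * r * (b - mu \<bullet> x) * (mu \<bullet> x) - (r + 1) * (b - mu \<bullet> x)\<^sup>2"
    (is "_ \<longleftrightarrow> ?crit")
proof -
  define a where "a = b - mu \<bullet> x"
  define q where "q = x \<bullet> (S *v x)"
  define nu where "nu = matrix_inv S *v mu"
  define p where "p = x \<bullet> (S *v x) * (nu \<bullet> (S *v nu)) - (mu \<bullet> x)\<^sup>2"
  have q: "q > 0" using pd x by (simp add: q_def)
  have nu: "S *v nu = mu"
    unfolding nu_def by (rule pos_def_matrix_inv_right[OF pd])
  have "(x \<bullet> (S *v nu))\<^sup>2 \<le> x \<bullet> (S *v x) * (nu \<bullet> (S *v nu))"
    by (rule pos_def_cauchy_schwarz[OF sym pd])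
  then have p: "p \<ge> 0"
    using symmetric_matrix_inner_commute[OF sym, of x nu] by (simp add: p_def nu inner_commute)
  have M: "mu \<bullet> (matrix_inv S *v mu) = nu \<bullet> (S *v nu)"
    unfolding nu by (simp add: nu_def inner_commute)
  note triple =
    ratio_hessian_form_triple[where S=S and x=x and mu=mu and b=b and r=r, folded q_def a_def]
  have "?crit \<longleftrightarrow> (r-1)*(mu \<bullet> x)\<^sup>2 + 2*r*a*(mu \<bullet> x) + (r+1)*a\<^sup>2 + p \<le> 0"
    unfolding M p_def a_def by (simp add: algebra_simps)
  also have "\<dots> \<longleftrightarrow> (\<forall>v. ratio_hessian_form r S mu b x v \<le> 0)"
  proof
    assume crit: "(r-1)*(mu \<bullet> x)\<^sup>2 + 2*r*a*(mu \<bullet> x) + (r+1)*a\<^sup>2 + p \<le> 0"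
    show "\<forall>v. ratio_hessian_form r S mu b x v \<le> 0"
    proof
      fix v
      obtain y c R where v: "mu \<bullet> v = (mu \<bullet> x) * y + c" "(S *v x) \<bullet> v = q * y"
        "v \<bullet> (S *v v) = q * y\<^sup>2 + R" and R: "0 \<le> R" and cs: "q * c\<^sup>2 \<le> p * R"
        using form_triple_bound[OF sym pd x nu, of v] by (auto simp: p_def q_def)
      have "(r-1)*((mu \<bullet> x)*y + c)\<^sup>2 + 2*r*a*((mu \<bullet> x)*y + c)*y + (r+1)*a\<^sup>2*y\<^sup>2 \<le> a\<^sup>2 / q * R"
        by (rule reduced_form_bound[OF _ p q R cs crit]) (use a in \<open>simp add: a_def\<close>)
      then show "ratio_hessian_form r S mu b x v \<le> 0"
        using triple[OF v] q by simp
    qed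
  next
    assume nonpos: "\<forall>v. ratio_hessian_form r S mu b x v \<le> 0"
    have "(r-1)*((mu \<bullet> x)*y + g*p)\<^sup>2 + 2*r*a*((mu \<bullet> x)*y + g*p)*y + (r+1)*a\<^sup>2*y\<^sup>2 \<le> a\<^sup>2*g\<^sup>2*p"
      for y g
    proof -
      obtain v where "mu \<bullet> v = (mu \<bullet> x) * y + g * p" "(S *v x) \<bullet> v = q * y"
        "v \<bullet> (S *v v) = q * y\<^sup>2 + q * g\<^sup>2 * p"
        using form_triple_attained[OF sym nu, of x y g] by (auto simp: p_def q_def algebra_simps)
      then have "ratio_hessian_form r S mu b x v = (r-1)*((mu \<bullet> x)*y + g*p)\<^sup>2
          + 2*r*a*((mu \<bullet> x)*y + g*p)*y + (r+1)*a\<^sup>2*y\<^sup>2 - a\<^sup>2*g\<^sup>2*p"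
        using triple q by simp
      then show ?thesis
        using nonpos[rule_format, of v] by linarith
    qed
    then show "(r-1)*(mu \<bullet> x)\<^sup>2 + 2*r*a*(mu \<bullet> x) + (r+1)*a\<^sup>2 + p \<le> 0"
      using reduced_form_nonpos_iff[OF _ p, of a r "mu \<bullet> x"] a by (simp add: a_def)
  qed
  finally show ?thesis
    by blast
qed

lemma hessian_form_via_gradient:
  fixes f :: "real^'n \<Rightarrow> real" and G :: "real^'n \<Rightarrow> real^'n"
  assumes S: "open S" "x \<in> S"
    and grad: "\<And>y. y \<in> S \<Longrightarrow> (f has_derivative (\<lambda>h. G y \<bullet> h)) (at y)"
    and D: "(G has_derivative D) (at x)"
  shows "(\<exists>H. has_hessian_at f x H \<and> (\<forall>v. P (v \<bullet> (H *v v)))) \<longleftrightarrow> (\<forall>v. P (v \<bullet> D v))"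
proof -
  have near: "\<forall>\<^sub>F y in nhds x. y \<in> S"
    using S eventually_nhds_in_open by blast
  have lin: "matrix D *v v = D v" for v
    using D by (simp add: has_derivative_bounded_linear bounded_linear.linear matrix_works)
  have "has_hessian_at f x (matrix D)"
    unfolding has_hessian_at_def lin
    using near grad D by (auto intro!: exI[of _ G] elim!: eventually_mono)
  moreover have "H *v v = D v" if H: "has_hessian_at f x H" for H v
  proof -
    obtain g where g: "\<forall>\<^sub>F y in nhds x. (f has_derivative (\<lambda>h. g y \<bullet> h)) (at y)"
      and Dg: "(g has_derivative (\<lambda>h. H *v h)) (at x)"
      using H unfolding has_hessian_at_def by blast
    have eq: "\<forall>\<^sub>F y in nhds x. g y = G y"
      using g near
    proof eventually_elim
      case (elim y)
      then show ?case
        using grad[of y] has_derivative_unique vector_eq_rdot by metis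
    qed
    have "(G has_derivative (\<lambda>h. H *v h)) (at x)"
    proof (rule has_derivative_transform_eventually[OF Dg])
      show "\<forall>\<^sub>F y in at x. g y = G y"
        using eq by (simp add: eventually_at_filter eventually_mono)
      show "g x = G x"
        using eq by (rule eventually_nhds_x_imp_x)
    qed simp
    then show ?thesis
      using D has_derivative_unique by metis
  qed
  ultimately show ?thesis
    using lin by metis
qed

lemma has_hessian_at_transform_open:
  assumes S: "open S" "x \<in> S" and eq: "\<And>y. y \<in> S \<Longrightarrow> f y = g y"
  shows "has_hessian_at f x H \<longleftrightarrow> has_hessian_at g x H"
proof -
  have near: "\<forall>\<^sub>F y in nhds x. y \<in> S"
    using S eventually_nhds_in_open by blast
  have "(\<forall>\<^sub>F y in nhds x. (f has_derivative F' y) (at y)) \<longleftrightarrow>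
        (\<forall>\<^sub>F y in nhds x. (g has_derivative F' y) (at y))" for F'
  proof (rule eventually_subst)
    show "\<forall>\<^sub>F y in nhds x. (f has_derivative F' y) (at y) = (g has_derivative F' y) (at y)"
      using near
    proof eventually_elim
      case (elim y)
      show ?case
        using has_derivative_transform_within_open[OF _ S(1) elim, of f "F' y" UNIV g]
          has_derivative_transform_within_open[OF _ S(1) elim, of g "F' y" UNIV f] eq
        by auto
    qed
  qed
  then show ?thesis
    unfolding has_hessian_at_def by simp
qed

lemma hessian_form_scaled_exp:
  fixes L :: "real^'n \<Rightarrow> real"
  assumes S: "open S" "x \<in> S"
    and grad: "\<And>y. y \<in> S \<Longrightarrow> (L has_derivative (\<lambda>h. G y \<bullet> h)) (at y)"
    and D: "(G has_derivative D) (at x)"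
  shows "(\<exists>H. has_hessian_at (\<lambda>y. c * exp (r * L y)) x H \<and> (\<forall>v. P (v \<bullet> (H *v v))))
     \<longleftrightarrow> (\<forall>v. P (c * r * exp (r * L x) * (r * (G x \<bullet> v)\<^sup>2 + v \<bullet> D v)))"
proof -
  define s where "s y = c * r * exp (r * L y)" for y
  have "((\<lambda>y. c * exp (r * L y)) has_derivative (\<lambda>h. (s y *\<^sub>R G y) \<bullet> h)) (at y)" if "y \<in> S" for y
    using grad[OF that] by (auto intro!: derivative_eq_intros simp: s_def)
  moreover have "(s has_derivative (\<lambda>h. r * (G x \<bullet> h) * s x)) (at x)"
    unfolding s_def using grad[OF S(2)] by (auto intro!: derivative_eq_intros)
  then have "((\<lambda>y. s y *\<^sub>R G y) has_derivative
      (\<lambda>v. s x *\<^sub>R D v + (r * (G x \<bullet> v) * s x) *\<^sub>R G x)) (at x)"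
    by (rule has_derivative_scaleR[OF _ D])
  ultimately have "(\<exists>H. has_hessian_at (\<lambda>y. c * exp (r * L y)) x H \<and> (\<forall>v. P (v \<bullet> (H *v v))))
     \<longleftrightarrow> (\<forall>v. P (v \<bullet> (s x *\<^sub>R D v + (r * (G x \<bullet> v) * s x) *\<^sub>R G x)))"
    by (rule hessian_form_via_gradient[OF S])
  also have "\<dots> \<longleftrightarrow> (\<forall>v. P (c * r * exp (r * L x) * (r * (G x \<bullet> v)\<^sup>2 + v \<bullet> D v)))"
    by (simp add: s_def inner_commute[of _ "G x"] power2_eq_square algebra_simps)
  finally show ?thesis .
qed

definition log_ratio_gradient :: "real^'n^'n \<Rightarrow> real^'n \<Rightarrow> real \<Rightarrow> real^'n \<Rightarrow> real^'n"
  where "log_ratio_gradient S mu b y =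
    (- 1 / (b - mu \<bullet> y)) *\<^sub>R mu + (- 1 / (y \<bullet> (S *v y))) *\<^sub>R (S *v y)"

lemma open_ratio_domain: "open {y::real^'n. 0 < b - mu \<bullet> y \<and> 0 < y \<bullet> (S *v y)}"
  by (auto intro!: open_Collect_conj open_Collect_less continuous_intros)

lemma has_derivative_affine_form: "((\<lambda>y. b - mu \<bullet> y) has_derivative (\<lambda>h. - (mu \<bullet> h))) (at y)"
  by (auto intro!: derivative_eq_intros)

lemma has_derivative_quadratic_form:
  fixes S :: "real^'n^'n"
  assumes "transpose S = S"
  shows "((\<lambda>y. y \<bullet> (S *v y)) has_derivative (\<lambda>h. 2 * ((S *v y) \<bullet> h))) (at y)"
proof -
  have "((\<lambda>y. y \<bullet> (S *v y)) has_derivative (\<lambda>h. y \<bullet> (S *v h) + h \<bullet> (S *v y))) (at y)"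
    by (auto intro!: derivative_eq_intros bounded_linear_imp_has_derivative)
  then show ?thesis
    using symmetric_matrix_inner_commute[OF assms, of y] by (simp add: inner_commute)
qed

lemma has_derivative_log_ratio:
  fixes S :: "real^'n^'n"
  assumes sym: "transpose S = S" and y: "0 < b - mu \<bullet> y" "0 < y \<bullet> (S *v y)"
  shows "((\<lambda>y. ln ((b - mu \<bullet> y) / sqrt (y \<bullet> (S *v y)))) has_derivative
    (\<lambda>h. log_ratio_gradient S mu b y \<bullet> h)) (at y)"
proof -
  have "((\<lambda>y. ln (b - mu \<bullet> y) - 1/2 * ln (y \<bullet> (S *v y))) has_derivative
      (\<lambda>h. - (mu \<bullet> h) * inverse (b - mu \<bullet> y)
        - 1/2 * (2 * ((S *v y) \<bullet> h) * inverse (y \<bullet> (S *v y))))) (at y)"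
    by (intro has_derivative_diff has_derivative_mult_right has_derivative_ln y
        has_derivative_affine_form has_derivative_quadratic_form[OF sym])
  moreover have "(\<lambda>h. - (mu \<bullet> h) * inverse (b - mu \<bullet> y)
        - 1/2 * (2 * ((S *v y) \<bullet> h) * inverse (y \<bullet> (S *v y))))
      = (\<lambda>h. log_ratio_gradient S mu b y \<bullet> h)"
    by (simp add: fun_eq_iff log_ratio_gradient_def inner_diff_left inverse_eq_divide)
  ultimately have "((\<lambda>y. ln (b - mu \<bullet> y) - 1/2 * ln (y \<bullet> (S *v y))) has_derivative
      (\<lambda>h. log_ratio_gradient S mu b y \<bullet> h)) (at y)"
    by simp
  then show ?thesis
  proof (rule has_derivative_transform_within_open[OF _ open_ratio_domain])
    show "y \<in> {y. 0 < b - mu \<bullet> y \<and> 0 < y \<bullet> (S *v y)}"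
      using y by simp
  next
    fix z
    assume "z \<in> {y. 0 < b - mu \<bullet> y \<and> 0 < y \<bullet> (S *v y)}"
    then show "ln (b - mu \<bullet> z) - 1/2 * ln (z \<bullet> (S *v z)) = ln ((b - mu \<bullet> z) / sqrt (z \<bullet> (S *v z)))"
      by (simp add: ln_div ln_sqrt)
  qed
qed

lemma log_ratio_gradient_derivative:
  fixes S :: "real^'n^'n"
  assumes sym: "transpose S = S" and x: "b - mu \<bullet> x \<noteq> 0" "x \<bullet> (S *v x) \<noteq> 0"
  obtains D where "(log_ratio_gradient S mu b has_derivative D) (at x)"
    and "\<And>v. r * (log_ratio_gradient S mu b x \<bullet> v)\<^sup>2 + v \<bullet> D v
      = ratio_hessian_form r S mu b x v / (b - mu \<bullet> x)\<^sup>2"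
proof
  let ?a = "b - mu \<bullet> x" and ?q = "x \<bullet> (S *v x)"
  have d1: "((\<lambda>y. - 1 / (b - mu \<bullet> y)) has_derivative (\<lambda>v. - (mu \<bullet> v) / ?a\<^sup>2)) (at x)"
    using has_derivative_divide'[OF has_derivative_const[of "-1"] has_derivative_affine_form x(1)]
    by (simp add: power2_eq_square)
  have d2: "((\<lambda>y. - 1 / (y \<bullet> (S *v y))) has_derivative (\<lambda>v. 2 * ((S *v x) \<bullet> v) / ?q\<^sup>2)) (at x)"
    using has_derivative_divide'[OF has_derivative_const[of "-1"]
        has_derivative_quadratic_form[OF sym] x(2)]
    by (simp add: power2_eq_square)
  have dS: "((*v) S has_derivative (*v) S) (at x)"
    by (rule bounded_linear_imp_has_derivative) simp
  show "(log_ratio_gradient S mu b has_derivative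
     (\<lambda>v. (- (mu \<bullet> v) / ?a\<^sup>2) *\<^sub>R mu
        + ((2 * ((S *v x) \<bullet> v) / ?q\<^sup>2) *\<^sub>R (S *v x) + (- 1 / ?q) *\<^sub>R (S *v v)))) (at x)"
    unfolding log_ratio_gradient_def
    by (rule has_derivative_eq_rhs[OF has_derivative_add[OF
          has_derivative_scaleR[OF d1 has_derivative_const] has_derivative_scaleR[OF d2 dS]]])
      (simp add: fun_eq_iff)
  fix v
  have grad: "log_ratio_gradient S mu b x \<bullet> v = - (mu \<bullet> v) / ?a - (S *v x) \<bullet> v / ?q"
    by (simp add: log_ratio_gradient_def inner_diff_left)
  have hess: "v \<bullet> ((- (mu \<bullet> v) / ?a\<^sup>2) *\<^sub>R mu
      + ((2 * ((S *v x) \<bullet> v) / ?q\<^sup>2) *\<^sub>R (S *v x) + (- 1 / ?q) *\<^sub>R (S *v v)))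
    = - (mu \<bullet> v)\<^sup>2 / ?a\<^sup>2 + 2 * ((S *v x) \<bullet> v)\<^sup>2 / ?q\<^sup>2 - v \<bullet> (S *v v) / ?q"
    by (simp add: inner_add_right inner_diff_right inner_commute[of v mu]
        inner_commute[of v "S *v x"] power2_eq_square)
  show "r * (log_ratio_gradient S mu b x \<bullet> v)\<^sup>2 + v \<bullet> ((- (mu \<bullet> v) / ?a\<^sup>2) *\<^sub>R mu
      + ((2 * ((S *v x) \<bullet> v) / ?q\<^sup>2) *\<^sub>R (S *v x) + (- 1 / ?q) *\<^sub>R (S *v v)))
    = ratio_hessian_form r S mu b x v / ?a\<^sup>2"
  proof -
    have "r * (- m / a - z / q)\<^sup>2 + (- m\<^sup>2 / a\<^sup>2 + 2 * z\<^sup>2 / q\<^sup>2 - P / q)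
      = ((r - 1) * m\<^sup>2 + 2 * r * (a / q) * m * z + (r + 2) * (a / q)\<^sup>2 * z\<^sup>2 - a\<^sup>2 / q * P) / a\<^sup>2"
      if "a \<noteq> 0" "q \<noteq> 0" for a q m z P :: real
      using that by (simp add: field_simps power2_eq_square)
    from this[OF x, of "mu \<bullet> v" "(S *v x) \<bullet> v" "v \<bullet> (S *v v)"] show ?thesis
      unfolding grad hess ratio_hessian_form_def .
  qed
qed

lemma hessian_form_log_ratio:
  fixes S :: "real^'n^'n"
  assumes sym: "transpose S = S" and x: "0 < b - mu \<bullet> x" "0 < x \<bullet> (S *v x)"
  shows "(\<exists>H. has_hessian_at (\<lambda>y. ln ((b - mu \<bullet> y) / sqrt (y \<bullet> (S *v y)))) x H
            \<and> (\<forall>v. P (v \<bullet> (H *v v))))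
     \<longleftrightarrow> (\<forall>v. P (ratio_hessian_form 0 S mu b x v / (b - mu \<bullet> x)\<^sup>2))"
proof -
  obtain D where D: "(log_ratio_gradient S mu b has_derivative D) (at x)"
    and form: "\<And>v. 0 * (log_ratio_gradient S mu b x \<bullet> v)\<^sup>2 + v \<bullet> D v
      = ratio_hessian_form 0 S mu b x v / (b - mu \<bullet> x)\<^sup>2"
    by (rule log_ratio_gradient_derivative[OF sym, where r=0]) (use x in auto)
  have "(\<exists>H. has_hessian_at (\<lambda>y. ln ((b - mu \<bullet> y) / sqrt (y \<bullet> (S *v y)))) x H
            \<and> (\<forall>v. P (v \<bullet> (H *v v)))) \<longleftrightarrow> (\<forall>v. P (v \<bullet> D v))"
    by (rule hessian_form_via_gradient[OF open_ratio_domain _ _ D])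
      (use x has_derivative_log_ratio[OF sym] in auto)
  then show ?thesis
    using form by simp
qed

lemma hessian_form_ratio_powr:
  fixes S :: "real^'n^'n"
  assumes sym: "transpose S = S" and x: "0 < b - mu \<bullet> x" "0 < x \<bullet> (S *v x)"
  shows "(\<exists>H. has_hessian_at (\<lambda>y. c * ((b - mu \<bullet> y) / sqrt (y \<bullet> (S *v y))) powr r) x H
            \<and> (\<forall>v. P (v \<bullet> (H *v v))))
     \<longleftrightarrow> (\<forall>v. P (c * r * ((b - mu \<bullet> x) / sqrt (x \<bullet> (S *v x))) powr r / (b - mu \<bullet> x)\<^sup>2
                    * ratio_hessian_form r S mu b x v))"
proof -
  define L where "L y = ln ((b - mu \<bullet> y) / sqrt (y \<bullet> (S *v y)))" for y
  obtain D where D: "(log_ratio_gradient S mu b has_derivative D) (at x)"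
    and form: "\<And>v. r * (log_ratio_gradient S mu b x \<bullet> v)\<^sup>2 + v \<bullet> D v
      = ratio_hessian_form r S mu b x v / (b - mu \<bullet> x)\<^sup>2"
    by (rule log_ratio_gradient_derivative[OF sym, where r=r]) (use x in auto)
  have "has_hessian_at (\<lambda>y. c * ((b - mu \<bullet> y) / sqrt (y \<bullet> (S *v y))) powr r) x H
      \<longleftrightarrow> has_hessian_at (\<lambda>y. c * exp (r * L y)) x H" for H
    by (rule has_hessian_at_transform_open[OF open_ratio_domain])
      (use x in \<open>auto simp: L_def powr_def\<close>)
  then have "(\<exists>H. has_hessian_at (\<lambda>y. c * ((b - mu \<bullet> y) / sqrt (y \<bullet> (S *v y))) powr r) x H
            \<and> (\<forall>v. P (v \<bullet> (H *v v))))
     \<longleftrightarrow> (\<exists>H. has_hessian_at (\<lambda>y. c * exp (r * L y)) x H \<and> (\<forall>v. P (v \<bullet> (H *v v))))"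
    by simp
  also have "\<dots> \<longleftrightarrow> (\<forall>v. P (c * r * exp (r * L x)
      * (r * (log_ratio_gradient S mu b x \<bullet> v)\<^sup>2 + v \<bullet> D v)))"
    by (rule hessian_form_scaled_exp[OF open_ratio_domain _ _ D])
      (use x has_derivative_log_ratio[OF sym] in \<open>auto simp: L_def\<close>)
  finally show ?thesis
    using x by (simp add: form L_def powr_def)
qed

lemma locally_concave_on_ratio_powr_zero:
  fixes S :: "real^'n^'n"
  assumes sym: "transpose S = S" and pd: "\<forall>x. x \<noteq> 0 \<longrightarrow> 0 < x \<bullet> (S *v x)"
  shows "locally_concave_on {x. x \<noteq> 0 \<and> 0 < b - mu \<bullet> x}
    (\<lambda>x. ((b - mu \<bullet> x) / sqrt (x \<bullet> (S *v x))) powr 0)"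
  unfolding locally_concave_on_def
proof
  fix x
  assume "x \<in> {x. x \<noteq> 0 \<and> 0 < b - mu \<bullet> x}"
  then have x: "0 < b - mu \<bullet> x" "0 < x \<bullet> (S *v x)"
    using pd by auto
  have "\<forall>v. 1 * 0 * ((b - mu \<bullet> x) / sqrt (x \<bullet> (S *v x))) powr 0 / (b - mu \<bullet> x)\<^sup>2
      * ratio_hessian_form 0 S mu b x v \<le> 0"
    by simp
  then show "\<exists>H. has_hessian_at (\<lambda>x. ((b - mu \<bullet> x) / sqrt (x \<bullet> (S *v x))) powr 0) x H
      \<and> (\<forall>v. v \<bullet> (H *v v) \<le> 0)"
    using hessian_form_ratio_powr[OF sym x, where c=1 and r=0 and P="\<lambda>t. t \<le> 0"] by simp
qed

lemma locally_convex_on_scaled_ratio_powr_iff: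
  fixes S :: "real^'n^'n"
  assumes sym: "transpose S = S" and pd: "\<forall>x. x \<noteq> 0 \<longrightarrow> 0 < x \<bullet> (S *v x)" and cr: "c * r < 0"
  shows "locally_convex_on {x. x \<noteq> 0 \<and> 0 < b - mu \<bullet> x}
      (\<lambda>x. c * ((b - mu \<bullet> x) / sqrt (x \<bullet> (S *v x))) powr r)
    \<longleftrightarrow> (\<forall>x \<in> {x. x \<noteq> 0 \<and> 0 < b - mu \<bullet> x}. x \<bullet> (S *v x) * (mu \<bullet> (matrix_inv S *v mu))
      \<le> (2 - r) * (mu \<bullet> x)\<^sup>2 - 2 * r * (b - mu \<bullet> x) * (mu \<bullet> x) - (r + 1) * (b - mu \<bullet> x)\<^sup>2)"
proof -
  have "(\<exists>H. has_hessian_at (\<lambda>x. c * ((b - mu \<bullet> x) / sqrt (x \<bullet> (S *v x))) powr r) x H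
        \<and> (\<forall>v. 0 \<le> v \<bullet> (H *v v)))
      \<longleftrightarrow> (\<forall>v. ratio_hessian_form r S mu b x v \<le> 0)" if "x \<noteq> 0" "0 < b - mu \<bullet> x" for x
  proof -
    have q: "0 < x \<bullet> (S *v x)"
      using pd that by blast
    let ?k = "c * r * ((b - mu \<bullet> x) / sqrt (x \<bullet> (S *v x))) powr r / (b - mu \<bullet> x)\<^sup>2"
    have "?k < 0"
      using cr that q by (simp add: divide_neg_pos mult_neg_pos)
    moreover have "0 \<le> k * t \<longleftrightarrow> t \<le> 0" if "k < 0" for k t :: real
      using that by (simp add: zero_le_mult_iff)
    ultimately have k: "0 \<le> ?k * t \<longleftrightarrow> t \<le> 0" for t
      by blast
    show ?thesis
      by (simp only: hessian_form_ratio_powr[OF sym that(2) q] k)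
  qed
  then show ?thesis
    unfolding locally_convex_on_def
    using ratio_hessian_form_nonpos_iff[OF sym pd] by simp
qed

lemma locally_concave_on_log_ratio_iff:
  fixes S :: "real^'n^'n"
  assumes sym: "transpose S = S" and pd: "\<forall>x. x \<noteq> 0 \<longrightarrow> 0 < x \<bullet> (S *v x)"
  shows "locally_concave_on {x. x \<noteq> 0 \<and> 0 < b - mu \<bullet> x}
      (\<lambda>x. ln ((b - mu \<bullet> x) / sqrt (x \<bullet> (S *v x))))
    \<longleftrightarrow> (\<forall>x \<in> {x. x \<noteq> 0 \<and> 0 < b - mu \<bullet> x}.
      x \<bullet> (S *v x) * (mu \<bullet> (matrix_inv S *v mu)) \<le> 2 * (mu \<bullet> x)\<^sup>2 - (b - mu \<bullet> x)\<^sup>2)"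
proof -
  have "(\<exists>H. has_hessian_at (\<lambda>x. ln ((b - mu \<bullet> x) / sqrt (x \<bullet> (S *v x)))) x H
        \<and> (\<forall>v. v \<bullet> (H *v v) \<le> 0))
      \<longleftrightarrow> x \<bullet> (S *v x) * (mu \<bullet> (matrix_inv S *v mu)) \<le> 2 * (mu \<bullet> x)\<^sup>2 - (b - mu \<bullet> x)\<^sup>2"
    if "x \<noteq> 0" "0 < b - mu \<bullet> x" for x
    using hessian_form_log_ratio[OF sym that(2), where P="\<lambda>t. t \<le> 0"]
      ratio_hessian_form_nonpos_iff[OF sym pd that, where r=0] pd that
    by (simp add: divide_le_0_iff)
  then show ?thesis
    unfolding locally_concave_on_def by simp
qed

lemma theta_condition_iff:
  fixes a q m M r :: real
  assumes q: "q > 0" and a: "a > 0"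
  shows "(let \<theta> = a\<^sup>2 / q in M \<le> (2 - r) * m\<^sup>2 / q - 2 * r * sqrt \<theta> * m / sqrt q - (r + 1) * \<theta>)
     \<longleftrightarrow> q * M \<le> (2 - r) * m\<^sup>2 - 2 * r * a * m - (r + 1) * a\<^sup>2"
proof -
  have sqrt_theta: "sqrt (a\<^sup>2 / q) = a / sqrt q"
    using a q by (simp add: real_sqrt_divide)
  have "(2 - r) * m\<^sup>2 / q - 2 * r * sqrt (a\<^sup>2 / q) * m / sqrt q - (r + 1) * (a\<^sup>2 / q)
      = ((2 - r) * m\<^sup>2 - 2 * r * a * m - (r + 1) * a\<^sup>2) / q"
    unfolding sqrt_theta using q by (simp add: field_simps)
  then show ?thesis
    using q by (simp add: Let_def pos_le_divide_eq mult.commute)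
qed

theorem lemma2p3:
  fixes r b :: real and \<mu> :: "real^'n" and \<Sigma> :: "real^'n^'n"
    and E :: "(real^'n) set" and f :: "real^'n \<Rightarrow> real"
  assumes sym: "transpose \<Sigma> = \<Sigma>"
    and pd: "\<forall>x. x \<noteq> 0 \<longrightarrow> 0 < x \<bullet> (\<Sigma> *v x)"
    and E_def: "E = {x. x \<noteq> 0 \<and> b - \<mu> \<bullet> x > 0}"
    and f_def: "f = (\<lambda>x. ((b - \<mu> \<bullet> x) / sqrt (x \<bullet> (\<Sigma> *v x))) powr r)"
  shows "(r = 0 \<longrightarrow> locally_concave_on E f)
       \<and> (r \<noteq> 0 \<longrightarrow>
           (locally_convex_on E (\<lambda>x. sgn (- r) * f x) \<longleftrightarrow>
            (\<forall>x\<in>E. let \<theta> = (b - \<mu> \<bullet> x)\<^sup>2 / (x \<bullet> (\<Sigma> *v x)) in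
               \<mu> \<bullet> (matrix_inv \<Sigma> *v \<mu>)
                 \<le> (2 - r) * (\<mu> \<bullet> x)\<^sup>2 / (x \<bullet> (\<Sigma> *v x))
                   - 2 * r * sqrt \<theta> * (\<mu> \<bullet> x) / sqrt (x \<bullet> (\<Sigma> *v x))
                   - (r + 1) * \<theta>)))
       \<and> (locally_concave_on E (\<lambda>x. ln ((b - \<mu> \<bullet> x) / sqrt (x \<bullet> (\<Sigma> *v x)))) \<longleftrightarrow>
            (\<forall>x\<in>E. let \<theta> = (b - \<mu> \<bullet> x)\<^sup>2 / (x \<bullet> (\<Sigma> *v x)) in
               \<mu> \<bullet> (matrix_inv \<Sigma> *v \<mu>) \<le> 2 * (\<mu> \<bullet> x)\<^sup>2 / (x \<bullet> (\<Sigma> *v x)) - \<theta>))"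
proof -
  have theta: "(let \<theta> = (b - \<mu> \<bullet> x)\<^sup>2 / (x \<bullet> (\<Sigma> *v x)) in
      \<mu> \<bullet> (matrix_inv \<Sigma> *v \<mu>) \<le> (2 - r') * (\<mu> \<bullet> x)\<^sup>2 / (x \<bullet> (\<Sigma> *v x))
        - 2 * r' * sqrt \<theta> * (\<mu> \<bullet> x) / sqrt (x \<bullet> (\<Sigma> *v x)) - (r' + 1) * \<theta>)
    \<longleftrightarrow> x \<bullet> (\<Sigma> *v x) * (\<mu> \<bullet> (matrix_inv \<Sigma> *v \<mu>))
      \<le> (2 - r') * (\<mu> \<bullet> x)\<^sup>2 - 2 * r' * (b - \<mu> \<bullet> x) * (\<mu> \<bullet> x) - (r' + 1) * (b - \<mu> \<bullet> x)\<^sup>2"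
    if "x \<in> E" for x r'
    using that pd by (intro theta_condition_iff) (auto simp: E_def)
  have "sgn (- r) * r < 0" if "r \<noteq> 0"
    using that by (simp add: sgn_if)
  then show ?thesis
    using locally_concave_on_ratio_powr_zero[OF sym pd, of b \<mu>]
      locally_convex_on_scaled_ratio_powr_iff[OF sym pd, of "sgn (- r)" r b \<mu>]
      locally_concave_on_log_ratio_iff[OF sym pd, of b \<mu>] theta[of _ 0]
    by (auto simp: E_def f_def theta)
qed

end
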